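(* For every integer $m\ge0$, the measure $\mathbb{P}^{(m)}_{\sigma}$ gives full measure to the set of paths $x=(x_p)_{p\in\mathcal P}\in\prod_{p\in\mathcal P}D(\mathbb{Q}_p)$ such that $x(t)\in\mathbb{A}_{\mathbb{Q}}$ for all $t\ge0$; that is, the adelic random walk $\mathbf S^{(m)}$ is almost surely $\mathbb{A}_{\mathbb{Q}}$-valued for all time.
   Context: Fix a real exponent $b>0$ and a sequence $\sigma=(\sigma_p)_{p\in\mathcal P}$ of nonnegative reals indexed by the set $\mathcal P$ of primes with $\sum_p\sigma_p<\infty$. For a prime $p$, $\mathbb{Q}_p$ denotes the $p$-adic numbers with absolute value $|\cdot|_p$ and $\mathbb{Z}_p$ its closed unit ball. Let $G_p\subset\mathbb{Q}_p$ be the set of $p$-adic numbers of the form $\sum_{k<0}a_kp^k$ with $a_k\in\{0,\dots,p-1\}$, only finitely many nonzero; $G_p$ is a set of representatives of $\mathbb{Q}_p/\mathbb{Z}_p$ and is given the group structure of $\mathbb{Q}_p/\mathbb{Z}_p$. Let $X^{(p)}$ be a $G_p$-valued random variable with $\Pr(|X^{(p)}|_p=p^k)=(p^b-1)p^{-kb}$ for every integer $k\ge1$, and, conditionally on $|X^{(p)}|_p=p^k$, uniformly distributed on the finite set $\{x\in G_p:|x|_p=p^k\}$. Let $X^{(p)}_1,X^{(p)}_2,\dots$ be i.i.d. copies of $X^{(p)}$ and $S^{(p)}_n=X^{(p)}_1+\dots+X^{(p)}_n$ (sum in the group $G_p$), $S^{(p)}_0=0$. Put $D_p=\frac{p^b(p-1)}{p^{b+1}-1}\sigma_p$.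 For an integer $m\ge0$, let $\mathbb{P}^{(m)}_p$ be the law on the Skorokhod space $D(\mathbb{Q}_p)$ of càdlàg paths $[0,\infty)\to\mathbb{Q}_p$ of the process $t\mapsto p^mS^{(p)}_{\lfloor D_pp^{mb}t\rfloor}$. Let $\mathbb{P}^{(m)}_\sigma=\prod_{p\in\mathcal P}\mathbb{P}^{(m)}_p$ be the product measure on $\prod_{p\in\mathcal P}D(\mathbb{Q}_p)$ (independent components, each random walk independent across primes), and call the coordinate process $\mathbf S^{(m)}(t)=(p^mS^{(p)}_{\lfloor D_pp^{mb}t\rfloor})_{p\in\mathcal P}$ the adelic random walk. The (finite rational) adeles are $\mathbb{A}_{\mathbb{Q}}=\{x=(x_p)\in\prod_p\mathbb{Q}_p: x_p\in\mathbb{Z}_p\text{ for all but finitely many }p\}$. *)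

theory Defs
  imports "HOL-Probability.Probability" "HOL-Computational_Algebra.Computational_Algebra"
begin

definition padic_abs :: "nat \<Rightarrow> rat \<Rightarrow> real" where
  "padic_abs p x = (if x = 0 then 0 else
     real p powi (int (multiplicity (int p) (snd (quotient_of x)))
                  - int (multiplicity (int p) (fst (quotient_of x)))))"

definition in_Zp :: "nat \<Rightarrow> rat \<Rightarrow> bool" where
  "in_Zp p x \<longleftrightarrow> padic_abs p x \<le> 1"

text \<open>G_p: the p-adic numbers sum_{k<0} a_k p^k with digits in {0..p-1}, finitely many
  nonzero; as rationals these are exactly the x in [0,1) with p-power denominator.\<close>
definition Gp :: "nat \<Rightarrow> rat set" where
  "Gp p = {x. 0 \<le> x \<and> x < 1 \<and> (\<exists>k::nat. x * of_nat p ^ k \<in> \<int>)}"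

text \<open>Group law of G_p (that of Q_p/Z_p) on representatives: x + y reduced mod 1.\<close>
definition Gp_add :: "rat \<Rightarrow> rat \<Rightarrow> rat" where
  "Gp_add x y = x + y - of_int \<lfloor>x + y\<rfloor>"

fun walk :: "(nat \<Rightarrow> 'a \<Rightarrow> rat) \<Rightarrow> nat \<Rightarrow> 'a \<Rightarrow> rat" where
  "walk X 0 \<omega> = 0"
| "walk X (Suc n) \<omega> = Gp_add (walk X n \<omega>) (X (Suc n) \<omega>)"

definition is_adele :: "(nat \<Rightarrow> rat) \<Rightarrow> bool" where
  "is_adele x \<longleftrightarrow> finite {p. prime p \<and> \<not> in_Zp p (x p)}"

definition Dp :: "real \<Rightarrow> (nat \<Rightarrow> real) \<Rightarrow> nat \<Rightarrow> real" where
  "Dp b \<sigma> p = real p powr b * (real p - 1) / (real p powr (b + 1) - 1) * \<sigma> p"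

end

theory Submission
  imports Defs
begin

text \<open>For a prime p, the rescaled walk p^m S^(p) can leave Z_p only if one of its first
  n_p(t) = floor (D_p p^(mb) t) increments has |X|_p > p^m: the localisation Z_(p) is closed
  under addition, and reduction modulo 1 only subtracts an integer. By the tail law of X this
  happens with probability at most n_p(t) p^(-mb) \<le> \<sigma>_p t, which is summable over p. The
  first Borel-Cantelli lemma, applied for each integer time N, and monotonicity of n_p(t) in t
  finish the proof.\<close>

definition p_integral :: "nat \<Rightarrow> rat \<Rightarrow> bool" where
  "p_integral p x \<longleftrightarrow> (\<exists>a d::int. \<not> int p dvd d \<and> x = of_int a / of_int d)"

lemma p_integral_of_int: "p \<noteq> 1 \<Longrightarrow> p_integral p (of_int k)"
  unfolding p_integral_def by (intro exI[of _ k] exI[of _ 1]) auto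

lemma p_integral_add:
  assumes "prime p" "p_integral p x" "p_integral p y"
  shows "p_integral p (x + y)"
proof -
  obtain a d where x: "\<not> int p dvd d" "x = of_int a / of_int d"
    using assms(2) p_integral_def by auto
  obtain a' d' where y: "\<not> int p dvd d'" "y = of_int a' / of_int d'"
    using assms(3) p_integral_def by auto
  have "d \<noteq> 0" "d' \<noteq> 0" using x(1) y(1) by auto
  then have "x + y = of_int (a * d' + a' * d) / of_int (d * d')"
    using x y by (simp add: field_simps)
  moreover have "\<not> int p dvd d * d'"
    using x(1) y(1) assms(1) by (simp add: prime_dvd_mult_iff)
  ultimately show ?thesis unfolding p_integral_def by blast
qed

lemma p_integral_diff:
  assumes "prime p" "p_integral p x" "p_integral p y"
  shows "p_integral p (x - y)"
proof -
  have "p_integral p (- y)"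
    using assms(3) unfolding p_integral_def by (metis minus_divide_left of_int_minus)
  from p_integral_add[OF assms(1,2) this] show ?thesis by simp
qed

lemma p_integral_imp_in_Zp:
  assumes "prime p" "p_integral p x"
  shows "in_Zp p x"
proof -
  \<comment> \<open>The reduced denominator divides every denominator of x, so it is prime to p.\<close>
  obtain a d where ad: "\<not> int p dvd d" "x = of_int a / of_int d"
    using assms(2) p_integral_def by auto
  obtain a' d' where q: "quotient_of x = (a', d')" by (cases "quotient_of x") auto
  have "d' > 0" "coprime a' d'" "x = of_int a' / of_int d'"
    using q quotient_of_denom_pos quotient_of_coprime quotient_of_div by blast+
  moreover have "d \<noteq> 0" using ad(1) by auto
  ultimately have "a' * d = a * d'"
    using ad(2) by (simp add: field_simps flip: of_int_mult of_int_eq_iff)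
  then have "d' dvd d"
    using \<open>coprime a' d'\<close> by (metis coprime_commute coprime_dvd_mult_right_iff dvd_triv_right)
  then have "multiplicity (int p) d' = 0"
    using ad(1) by (meson dvd_trans not_dvd_imp_multiplicity_0)
  moreover have "real p powi (- int (multiplicity (int p) a')) \<le> 1"
    using prime_gt_1_nat[OF assms(1)] by (simp add: power_int_minus inverse_le_1_iff one_le_power)
  ultimately show ?thesis unfolding in_Zp_def padic_abs_def using q by simp
qed

lemma p_integral_pow_mult_if_padic_abs_le:
  assumes "prime p" "padic_abs p x \<le> real p ^ m"
  shows "p_integral p (of_nat p ^ m * x)"
proof -
  obtain a d where q: "quotient_of x = (a, d)" by (cases "quotient_of x") auto
  have x: "x = of_int a / of_int d" and "d > 0" and "coprime a d"
    using q quotient_of_div quotient_of_denom_pos quotient_of_coprime by blast+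
  have p: "prime (int p)" "real p > 1" using assms(1) prime_gt_1_nat by auto
  define v where "v = multiplicity (int p) d"
  obtain d' where d: "d = int p ^ v * d'" "\<not> int p dvd d'"
    using multiplicity_decompose'[of d "int p"] \<open>d > 0\<close> p(1) v_def
    by (metis not_prime_unit order_less_irrefl)
  have "v \<le> m"
  proof (cases "v = 0")
    case False
    then have "int p dvd d" by (metis not_dvd_imp_multiplicity_0 v_def)
    then have "\<not> int p dvd a"
      using \<open>coprime a d\<close> p(1) by (meson coprime_common_divisor not_prime_unit)
    then have "x \<noteq> 0" and "multiplicity (int p) a = 0"
      using x \<open>d > 0\<close> by (auto simp: not_dvd_imp_multiplicity_0)
    then have "real p ^ v \<le> real p ^ m"
      using assms(2) q unfolding padic_abs_def v_def by simp
    then show ?thesis using p(2) by (simp add: power_increasing_iff)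
  qed simp
  then have "(of_nat p ^ m :: rat) = of_nat p ^ (m - v) * of_nat p ^ v"
    by (simp flip: power_add)
  then have "of_nat p ^ m * x = of_int (int p ^ (m - v) * a) / of_int d'"
    using x d \<open>d > 0\<close> p(2) by (simp add: field_simps)
  then show ?thesis using d(2) unfolding p_integral_def by blast
qed

lemma p_integral_scaled_walk:
  assumes "prime p" "\<And>i. i \<in> {1..n} \<Longrightarrow> padic_abs p (X i \<omega>) \<le> real p ^ m"
  shows "p_integral p (of_nat p ^ m * walk X n \<omega>)"
  using assms(2)
proof (induction n)
  case 0
  show ?case using p_integral_of_int[of p 0] prime_gt_1_nat[OF assms(1)] by simp
next
  case (Suc n)
  have "p_integral p (of_nat p ^ m * walk X n \<omega> + of_nat p ^ m * X (Suc n) \<omega>)"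
    using Suc p_integral_add p_integral_pow_mult_if_padic_abs_le assms(1) by simp
  moreover have "p_integral p (of_int (int p ^ m * \<lfloor>walk X n \<omega> + X (Suc n) \<omega>\<rfloor>))"
    using prime_gt_1_nat[OF assms(1)] by (intro p_integral_of_int) simp
  ultimately show ?case
    using p_integral_diff[OF assms(1)] by (simp add: Gp_add_def algebra_simps)
qed

lemma is_adele_scaled_walks:
  assumes "finite {p. prime p \<and> (\<exists>i \<in> {1..n p}. real p ^ m < padic_abs p (X p i \<omega>))}"
  shows "is_adele (\<lambda>p. of_nat p ^ m * walk (X p) (n p) \<omega>)"
proof -
  have "in_Zp p (of_nat p ^ m * walk (X p) (n p) \<omega>)"
    if "prime p" "\<not> (\<exists>i \<in> {1..n p}. real p ^ m < padic_abs p (X p i \<omega>))" for p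
    using that by (intro p_integral_imp_in_Zp p_integral_scaled_walk) (auto simp: not_less)
  then have "{p. prime p \<and> \<not> in_Zp p (of_nat p ^ m * walk (X p) (n p) \<omega>)}
      \<subseteq> {p. prime p \<and> (\<exists>i \<in> {1..n p}. real p ^ m < padic_abs p (X p i \<omega>))}"
    by blast
  then show ?thesis
    unfolding is_adele_def using assms finite_subset by blast
qed

lemma (in prob_space) prob_gt_power_le:
  fixes f :: "'a \<Rightarrow> real"
  assumes "q > 1" and [measurable]: "f \<in> borel_measurable M"
    and level: "\<And>k. k \<ge> 1 \<Longrightarrow>
      prob {\<omega> \<in> space M. f \<omega> = q ^ k} = (q powr b - 1) * q powr (- real k * b)"
  shows "prob {\<omega> \<in> space M. q ^ j < f \<omega>} \<le> q powr (- real j * b)"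
proof (induction j)
  case 0
  show ?case using assms(1) by simp
next
  case (Suc j)
  \<comment> \<open>The tail beyond q^(j+1) and the level set at q^(j+1) lie disjointly in the tail beyond
    q^j, and the level set has mass q^(-jb) - q^(-(j+1)b).\<close>
  let ?T = "\<lambda>j. {\<omega> \<in> space M. q ^ j < f \<omega>}" and ?L = "{\<omega> \<in> space M. f \<omega> = q ^ Suc j}"
  have "q ^ j < q ^ Suc j" using assms(1) by simp
  then have "?T (Suc j) \<union> ?L \<subseteq> ?T j" and "?T (Suc j) \<inter> ?L = {}" by auto
  moreover have "?T j \<in> events" "?T (Suc j) \<in> events" "?L \<in> events" by measurable
  ultimately have "prob (?T (Suc j)) + prob ?L \<le> prob (?T j)"
    using finite_measure_Union[of "?T (Suc j)" ?L] finite_measure_mono[of "?T (Suc j) \<union> ?L" "?T j"]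
    by simp
  moreover have "q powr b * q powr (- real (Suc j) * b) = q powr (- real j * b)"
    using assms(1) by (simp add: algebra_simps flip: powr_add)
  then have "prob ?L = q powr (- real j * b) - q powr (- real (Suc j) * b)"
    using level[of "Suc j"] by (simp add: algebra_simps)
  ultimately show ?case using Suc.IH by linarith
qed

lemma (in prob_space) AE_finitely_many_indices_hit:
  fixes B :: "nat \<Rightarrow> nat \<Rightarrow> 'a set" and n :: "nat \<Rightarrow> real \<Rightarrow> nat" and r :: "nat \<Rightarrow> real"
  assumes events: "\<And>p i. i \<ge> 1 \<Longrightarrow> B p i \<in> events"
    and prob_le: "\<And>p i. i \<ge> 1 \<Longrightarrow> prob (B p i) \<le> r p"
    and mono: "\<And>p. mono (n p)"
    and summable: "\<And>N. summable (\<lambda>p. real (n p (real N)) * r p)"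
  shows "AE \<omega> in M. \<forall>t. finite {p. \<exists>i \<in> {1..n p t}. \<omega> \<in> B p i}"
proof -
  define A where "A N p = (\<Union>i \<in> {1..n p (real N)}. B p i)" for N p
  have A_events: "A N p \<in> events" for N p
    unfolding A_def using events by auto
  have prob_A: "prob (A N p) \<le> real (n p (real N)) * r p" for N p
  proof -
    have "prob (A N p) \<le> (\<Sum>i \<in> {1..n p (real N)}. prob (B p i))"
      unfolding A_def using events by (intro finite_measure_subadditive_finite) auto
    also have "\<dots> \<le> (\<Sum>i \<in> {1..n p (real N)}. r p)"
      using prob_le by (intro sum_mono) auto
    finally show ?thesis by simp
  qed
  have "summable (\<lambda>p. prob (A N p))" for N
    using summable[of N] by (rule summable_comparison_test') (simp add: prob_A)
  then have "AE \<omega> in M. eventually (\<lambda>p. \<omega> \<in> space M - A N p) sequentially" for N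
    using A_events by (intro borel_cantelli_AE1) (auto simp: emeasure_eq_measure)
  then have "AE \<omega> in M. finite {p. \<omega> \<in> A N p}" for N
    unfolding cofinite_eq_sequentially[symmetric] eventually_cofinite
    by (rule eventually_mono) (erule finite_subset[rotated], blast)
  then have "AE \<omega> in M. \<forall>N. finite {p. \<omega> \<in> A N p}"
    by (simp add: AE_all_countable)
  then show ?thesis
  proof (rule eventually_mono, intro allI)
    fix \<omega> t assume finite_A: "\<forall>N. finite {p. \<omega> \<in> A N p}"
    have "{1..n p t} \<subseteq> {1..n p (real (nat \<lceil>t\<rceil>))}" for p
      using monoD[OF mono, of t] by (simp add: real_nat_ceiling_ge)
    then have "{p. \<exists>i \<in> {1..n p t}. \<omega> \<in> B p i} \<subseteq> {p. \<omega> \<in> A (nat \<lceil>t\<rceil>) p}"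
      unfolding A_def by blast
    then show "finite {p. \<exists>i \<in> {1..n p t}. \<omega> \<in> B p i}"
      using finite_A finite_subset by blast
  qed
qed

lemma Dp_nonneg_le:
  assumes "1 < p" "0 \<le> b" "0 \<le> \<sigma> p"
  shows "0 \<le> Dp b \<sigma> p" and "Dp b \<sigma> p \<le> \<sigma> p"
proof -
  define c where "c = real p powr b"
  have "1 \<le> c" using assms(1,2) by (simp add: c_def ge_one_powr_ge_zero)
  have "real p powr (b + 1) = real p * c" using assms(1) by (simp add: c_def powr_add)
  moreover have "real p * c - 1 > 0"
    using less_1_mult'[of "real p" c] \<open>1 \<le> c\<close> assms(1) by simp
  ultimately have Dp_eq: "Dp b \<sigma> p = c * (real p - 1) / (real p * c - 1) * \<sigma> p"
    and coeff_nonneg: "0 \<le> c * (real p - 1) / (real p * c - 1)"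
    and coeff_le_1: "c * (real p - 1) / (real p * c - 1) \<le> 1"
    using \<open>1 \<le> c\<close> assms(1) by (simp_all add: Dp_def c_def[symmetric] field_simps)
  show "0 \<le> Dp b \<sigma> p"
    unfolding Dp_eq using coeff_nonneg assms(3) by (rule mult_nonneg_nonneg)
  show "Dp b \<sigma> p \<le> \<sigma> p"
    unfolding Dp_eq using assms(3) coeff_nonneg coeff_le_1 by (rule mult_left_le_one_le)
qed

lemma summable_large_step_bound:
  fixes \<sigma> :: "nat \<Rightarrow> real"
  assumes "0 \<le> b" "0 \<le> t" "\<And>p. prime p \<Longrightarrow> 0 \<le> \<sigma> p" "\<sigma> summable_on {p. prime p}"
  shows "summable (\<lambda>p. if prime p then real (nat \<lfloor>Dp b \<sigma> p * real p powr (real m * b) * t\<rfloor>)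
    * real p powr (- real m * b) else 0)"
proof (rule summable_comparison_test')
  have "(\<lambda>p. if prime p then \<sigma> p else 0) summable_on UNIV \<longleftrightarrow> \<sigma> summable_on {p. prime p}"
    by (rule summable_on_cong_neutral) auto
  then show "summable (\<lambda>p. (if prime p then \<sigma> p else 0) * t)"
    using assms(3,4) by (intro summable_mult2) (simp add: summable_on_UNIV_nonneg_real_iff)
  fix p
  show "norm (if prime p then real (nat \<lfloor>Dp b \<sigma> p * real p powr (real m * b) * t\<rfloor>)
      * real p powr (- real m * b) else 0) \<le> (if prime p then \<sigma> p else 0) * t"
  proof (cases "prime p")
    case True
    then have p: "1 < p" using prime_gt_1_nat by blast
    have "real (nat \<lfloor>Dp b \<sigma> p * real p powr (real m * b) * t\<rfloor>) * real p powr (- real m * b)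
        \<le> Dp b \<sigma> p * real p powr (real m * b) * t * real p powr (- real m * b)"
      using Dp_nonneg_le(1)[OF p assms(1)] assms(2,3) True
      by (intro mult_right_mono) auto
    also have "\<dots> = Dp b \<sigma> p * t"
      using p by (simp flip: powr_add)
    also have "\<dots> \<le> \<sigma> p * t"
      using Dp_nonneg_le(2)[OF p assms(1)] assms(2,3) True by (intro mult_right_mono) auto
    finally show ?thesis using True by simp
  qed (simp add: assms(2))
qed

lemma (in prob_space) AE_finitely_many_large_steps:
  fixes X :: "nat \<Rightarrow> nat \<Rightarrow> 'a \<Rightarrow> rat"
  assumes "0 \<le> b" "\<And>p. prime p \<Longrightarrow> 0 \<le> \<sigma> p" "\<sigma> summable_on {p. prime p}"
    and X_meas: "\<And>p i. prime p \<Longrightarrow> 1 \<le> i \<Longrightarrow> X p i \<in> M \<rightarrow>\<^sub>M count_space UNIV"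
    and level: "\<And>p i k. prime p \<Longrightarrow> 1 \<le> i \<Longrightarrow> 1 \<le> k \<Longrightarrow>
      prob {\<omega> \<in> space M. padic_abs p (X p i \<omega>) = real p ^ k}
        = (real p powr b - 1) * real p powr (- real k * b)"
  shows "AE \<omega> in M. \<forall>t. finite {p. prime p \<and>
    (\<exists>i \<in> {1..nat \<lfloor>Dp b \<sigma> p * real p powr (real m * b) * t\<rfloor>}.
      real p ^ m < padic_abs p (X p i \<omega>))}"
proof -
  \<comment> \<open>Off the primes Dp may be negative; setting n to 0 there keeps it monotone in t.\<close>
  define n where "n p t = (if prime p then nat \<lfloor>Dp b \<sigma> p * real p powr (real m * b) * t\<rfloor> else 0)"
    for p t
  define r where "r p = (if prime p then real p powr (- real m * b) else 0)" for p
  define B where "B p i = {\<omega> \<in> space M. prime p \<and> real p ^ m < padic_abs p (X p i \<omega>)}" for p i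
  have "AE \<omega> in M. \<forall>t. finite {p. \<exists>i \<in> {1..n p t}. \<omega> \<in> B p i}"
  proof (rule AE_finitely_many_indices_hit)
    fix p i :: nat assume i: "1 \<le> i"
    then have meas: "(\<lambda>\<omega>. padic_abs p (X p i \<omega>)) \<in> borel_measurable M" if "prime p"
      using that by (intro measurable_compose[OF X_meas]) auto
    show "B p i \<in> events"
      using meas unfolding B_def by (cases "prime p") auto
    show "prob (B p i) \<le> r p"
    proof (cases "prime p")
      case True
      then show ?thesis
        using prob_gt_power_le[OF _ meas[OF True] level[OF True i]] prime_gt_1_nat
        unfolding B_def r_def by auto
    qed (simp add: B_def r_def)
  next
    show "mono (n p)" for p
      using Dp_nonneg_le(1)[of p b \<sigma>] prime_gt_1_nat assms(1,2)
      unfolding n_def by (auto intro!: monoI nat_mono floor_mono mult_left_mono)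
    show "summable (\<lambda>p. real (n p (real N)) * r p)" for N
      by (intro back_subst[of summable, OF summable_large_step_bound[of b "real N" \<sigma> m]])
        (use assms(1-3) in \<open>auto simp: n_def r_def fun_eq_iff\<close>)
  qed
  then show ?thesis
    using AE_space
  proof eventually_elim
    case (elim \<omega>)
    have "{p. prime p \<and> (\<exists>i \<in> {1..nat \<lfloor>Dp b \<sigma> p * real p powr (real m * b) * t\<rfloor>}.
        real p ^ m < padic_abs p (X p i \<omega>))} = {p. \<exists>i \<in> {1..n p t}. \<omega> \<in> B p i}" for t
      using elim(2) by (auto simp: n_def B_def)
    then show ?case using elim(1) by simp
  qed
qed

theorem theorem7:
  fixes M :: "'a measure" and X :: "nat \<Rightarrow> nat \<Rightarrow> 'a \<Rightarrow> rat"
    and b :: real and \<sigma> :: "nat \<Rightarrow> real" and m :: nat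
  assumes "prob_space M"
    and "b > 0"
    and "\<And>p. prime p \<Longrightarrow> \<sigma> p \<ge> 0"
    and "\<sigma> summable_on {p. prime p}"
    and "prob_space.indep_vars M (\<lambda>_. count_space UNIV) (\<lambda>(p, i). X p i)
           ({p. prime p} \<times> {1..})"
    and "\<And>p i \<omega>. prime p \<Longrightarrow> i \<ge> 1 \<Longrightarrow> \<omega> \<in> space M \<Longrightarrow> X p i \<omega> \<in> Gp p"
    and "\<And>p i k. prime p \<Longrightarrow> i \<ge> 1 \<Longrightarrow> k \<ge> 1 \<Longrightarrow>
           measure M {\<omega> \<in> space M. padic_abs p (X p i \<omega>) = real p ^ k}
             = (real p powr b - 1) * real p powr (- real k * b)"
    and "\<And>p i k x. prime p \<Longrightarrow> i \<ge> 1 \<Longrightarrow> k \<ge> 1 \<Longrightarrow> x \<in> Gp p \<Longrightarrow>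
           padic_abs p x = real p ^ k \<Longrightarrow>
           measure M {\<omega> \<in> space M. X p i \<omega> = x}
             = measure M {\<omega> \<in> space M. padic_abs p (X p i \<omega>) = real p ^ k}
               / real (card {y \<in> Gp p. padic_abs p y = real p ^ k})"
  shows "AE \<omega> in M. \<forall>t::real \<ge> 0.
           is_adele (\<lambda>p. of_nat p ^ m *
             walk (X p) (nat \<lfloor>Dp b \<sigma> p * real p powr (real m * b) * t\<rfloor>) \<omega>)"
proof -
  interpret prob_space M by fact
  have "X p i \<in> M \<rightarrow>\<^sub>M count_space UNIV" if "prime p" "1 \<le> i" for p i
    using assms(5) that unfolding indep_vars_def by auto
  then have "AE \<omega> in M. \<forall>t. finite {p. prime p \<and>
      (\<exists>i \<in> {1..nat \<lfloor>Dp b \<sigma> p * real p powr (real m * b) * t\<rfloor>}.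
        real p ^ m < padic_abs p (X p i \<omega>))}"
    using assms(2-4,7) by (intro AE_finitely_many_large_steps) auto
  then show ?thesis
    by (rule eventually_mono) (simp add: is_adele_scaled_walks)
qed

end
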